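(* Let $P$ be any product rule with $P$-product $*$, and suppose that for each $b\in\Sigma$ there is a term $Q_b$ over $\{x,\dot x,y,\dot y\}$ such that $\delta^R_b(f*g)=[\![Q_b]\!]_{[x\mapsto f,\dot x\mapsto\delta^R_bf,y\mapsto g,\dot y\mapsto\delta^R_bg]}$ for all series $f,g$. Then for every $P$-finite series $f$ and every $b\in\Sigma$, the series $\delta^R_bf$ is $P$-finite.
   Context: Let $\Sigma$ be a finite alphabet, $\Sigma^*$ the finite words with empty word $\varepsilon$. A series is $f:\Sigma^*\to\mathbb Q$, $f_w=f(w)$; series form a $\mathbb Q$-vector space under pointwise operations with zero $\mathbb 0$. For $a\in\Sigma$, $\delta_af$ is $w\mapsto f(aw)$ and $\delta^R_af$ is $w\mapsto f(wa)$. Terms over $X$: generated by $u,v::=x\mid 0\mid c\cdot u\mid u+v\mid u*v$. A product rule is a term $P$ over $\{x,\dot x,y,\dot y\}$. The $P$-product $*$ and semantics $[\![u]\!]_\varrho$ of terms under valuations are the unique pair with $(f*g)_\varepsilon=f_\varepsilon g_\varepsilon$, $\delta_a(f*g)=[\![P]\!]_{[x\mapsto f,\dot x\mapsto\delta_af,y\mapsto g,\dot y\mapsto\delta_ag]}$, and $[\![\cdot]\!]_\varrho$ interpreting variables via $\varrho$, constructors by zero, scalar multiplication, addition, $*$. $P$-finite: $A(g_1,\dots,g_k)$ is the smallest set of series containing $\mathbb 0,g_1,\dots,g_k$ closed under scalar multiplication, $+$, $*$; $f$ is $P$-finite if there are $g_1=f,\dots,g_k$ with $\delta_ag_i\in A(g_1,\dots,g_k)$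 for all $i$ and $a\in\Sigma$. *)

theory Defs
  imports Complex_Main
begin

type_synonym 'a series = "'a list \<Rightarrow> rat"

definition dl :: "'a \<Rightarrow> 'a series \<Rightarrow> 'a series" where
  "dl a f = (\<lambda>w. f (a # w))"

definition dr :: "'a \<Rightarrow> 'a series \<Rightarrow> 'a series" where
  "dr a f = (\<lambda>w. f (w @ [a]))"

datatype 'v trm = Var 'v | Zero | Scal rat "'v trm" | Add "'v trm" "'v trm" | Mul "'v trm" "'v trm"

datatype pvar = X | Xd | Y | Yd

primrec sem :: "('a series \<Rightarrow> 'a series \<Rightarrow> 'a series) \<Rightarrow> ('v \<Rightarrow> 'a series) \<Rightarrow> 'v trm \<Rightarrow> 'a series" where
  "sem m \<rho> (Var v) = \<rho> v"
| "sem m \<rho> Zero = (\<lambda>_. 0)"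
| "sem m \<rho> (Scal c u) = (\<lambda>w. c * sem m \<rho> u w)"
| "sem m \<rho> (Add u v) = (\<lambda>w. sem m \<rho> u w + sem m \<rho> v w)"
| "sem m \<rho> (Mul u v) = m (sem m \<rho> u) (sem m \<rho> v)"

definition val :: "'a series \<Rightarrow> 'a series \<Rightarrow> 'a series \<Rightarrow> 'a series \<Rightarrow> pvar \<Rightarrow> 'a series" where
  "val f fd g gd = (\<lambda>v. case v of X \<Rightarrow> f | Xd \<Rightarrow> fd | Y \<Rightarrow> g | Yd \<Rightarrow> gd)"

definition is_pprod :: "pvar trm \<Rightarrow> ('a series \<Rightarrow> 'a series \<Rightarrow> 'a series) \<Rightarrow> bool" where
  "is_pprod P m \<longleftrightarrow> (\<forall>f g. m f g [] = f [] * g [] \<and>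
      (\<forall>a. dl a (m f g) = sem m (val f (dl a f) g (dl a g)) P))"

definition pprod :: "pvar trm \<Rightarrow> 'a series \<Rightarrow> 'a series \<Rightarrow> 'a series" where
  "pprod P = (THE m. is_pprod P m)"

inductive_set alg :: "('a series \<Rightarrow> 'a series \<Rightarrow> 'a series) \<Rightarrow> 'a series set \<Rightarrow> 'a series set"
  for m G where
  zero: "(\<lambda>_. 0) \<in> alg m G"
| gen: "g \<in> G \<Longrightarrow> g \<in> alg m G"
| scal: "u \<in> alg m G \<Longrightarrow> (\<lambda>w. c * u w) \<in> alg m G"
| add: "u \<in> alg m G \<Longrightarrow> v \<in> alg m G \<Longrightarrow> (\<lambda>w. u w + v w) \<in> alg m G"
| mul: "u \<in> alg m G \<Longrightarrow> v \<in> alg m G \<Longrightarrow> m u v \<in> alg m G"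

definition pfinite :: "pvar trm \<Rightarrow> ('a::finite) series \<Rightarrow> bool" where
  "pfinite P f \<longleftrightarrow> (\<exists>gs. gs \<noteq> [] \<and> hd gs = f \<and>
      (\<forall>g\<in>set gs. \<forall>a. dl a g \<in> alg (pprod P) (set gs)))"

end

theory Submission
  imports Defs
begin

text \<open>If \<open>g\<^sub>1, \<dots>, g\<^sub>k\<close> witness that \<open>f\<close> is P-finite, then \<open>\<delta>\<^sup>R\<^sub>b g\<^sub>1, \<dots>, \<delta>\<^sup>R\<^sub>b g\<^sub>k, g\<^sub>1, \<dots>, g\<^sub>k\<close>
  witness that \<open>\<delta>\<^sup>R\<^sub>b f\<close> is. Left and right derivatives commute, so
  \<open>\<delta>\<^sub>a \<delta>\<^sup>R\<^sub>b g\<^sub>i = \<delta>\<^sup>R\<^sub>b \<delta>\<^sub>a g\<^sub>i\<close> with \<open>\<delta>\<^sub>a g\<^sub>i \<in> A(G)\<close>; and the rule \<open>Q\<^sub>b\<close> shows, by induction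
  over the construction of \<open>A(G)\<close>, that \<open>\<delta>\<^sup>R\<^sub>b\<close> maps \<open>A(G)\<close> into \<open>A(G \<union> \<delta>\<^sup>R\<^sub>b G)\<close>.\<close>

lemma alg_mono: "u \<in> alg m G \<Longrightarrow> G \<subseteq> H \<Longrightarrow> u \<in> alg m H"
  by (induction rule: alg.induct) (auto intro: alg.intros)

lemma sem_in_alg: "(\<And>v. \<rho> v \<in> alg m H) \<Longrightarrow> sem m \<rho> Q \<in> alg m H"
  by (induction Q) (auto intro: alg.intros)

lemma dr_in_alg:
  assumes Q: "\<And>f g. dr b (m f g) = sem m (val f (dr b f) g (dr b g)) Q"
    and "u \<in> alg m G"
  shows "dr b u \<in> alg m (G \<union> dr b ` G)"
  using \<open>u \<in> alg m G\<close>
proof (induction rule: alg.induct)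
  case zero
  then show ?case by (auto simp: dr_def intro: alg.zero)
next
  case (gen g)
  then show ?case by (auto intro: alg.gen)
next
  case (scal u c)
  then show ?case using alg.scal[of "dr b u" m _ c] by (simp add: dr_def)
next
  case (add u v)
  then show ?case using alg.add[of "dr b u" m _ "dr b v"] by (simp add: dr_def)
next
  case (mul u v)
  have "u \<in> alg m (G \<union> dr b ` G)" "v \<in> alg m (G \<union> dr b ` G)"
    using mul.hyps alg_mono by blast+
  with mul.IH have "sem m (val u (dr b u) v (dr b v)) Q \<in> alg m (G \<union> dr b ` G)"
    by (intro sem_in_alg) (simp add: val_def split: pvar.split)
  then show ?case by (simp add: Q)
qed

lemma dl_dr_commute: "dl a (dr b g) = dr b (dl a g)"
  by (simp add: dl_def dr_def)

lemma pfinite_dr: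
  assumes Q: "\<And>f g. dr b (pprod P f g) = sem (pprod P) (val f (dr b f) g (dr b g)) Q"
    and "pfinite P f"
  shows "pfinite P (dr b f)"
proof -
  obtain gs where gs: "gs \<noteq> []" "hd gs = f"
    and dl_gs: "\<And>g a. g \<in> set gs \<Longrightarrow> dl a g \<in> alg (pprod P) (set gs)"
    using \<open>pfinite P f\<close> unfolding pfinite_def by blast
  define hs where "hs = map (dr b) gs @ gs"
  have set_hs: "set hs = set gs \<union> dr b ` set gs"
    by (auto simp: hs_def)
  have "dl a h \<in> alg (pprod P) (set hs)" if "h \<in> set hs" for h a
  proof -
    from that consider "h \<in> set gs" | g where "g \<in> set gs" "h = dr b g"
      by (auto simp: hs_def)
    then show ?thesis
    proof cases
      case 1
      then show ?thesis using dl_gs alg_mono set_hs by blast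
    next
      case 2
      then show ?thesis
        using dr_in_alg[OF Q dl_gs] set_hs by (simp add: dl_dr_commute)
    qed
  qed
  moreover have "hs \<noteq> []" "hd hs = dr b f"
    using gs by (auto simp: hs_def neq_Nil_conv)
  ultimately show ?thesis
    unfolding pfinite_def by blast
qed

theorem mainTheorem16:
  fixes P :: "pvar trm"
  assumes "\<forall>b::'a::finite. \<exists>Q :: pvar trm. \<forall>f g :: 'a series.
      dr b (pprod P f g) = sem (pprod P) (val f (dr b f) g (dr b g)) Q"
  shows "\<forall>f :: 'a series. pfinite P f \<longrightarrow> (\<forall>b. pfinite P (dr b f))"
proof (intro allI impI)
  fix f :: "'a series" and b :: 'a
  assume "pfinite P f"
  from assms obtain Q where "\<And>f g :: 'a series.
      dr b (pprod P f g) = sem (pprod P) (val f (dr b f) g (dr b g)) Q"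
    by blast
  then show "pfinite P (dr b f)"
    using pfinite_dr \<open>pfinite P f\<close> by blast
qed

end
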